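(* Let $G$ be an upward planar single-source digraph with maximum in- and outdegree at most two. Then in every upward planar embedding of $G$ and for every face $f$, there are at most two edges that are bad with respect to $f$.
   Context: A planar drawing of a digraph is upward if every edge $(u,v)$ is drawn as a curve strictly increasing in $y$ from $u$ to $v$; an upward planar embedding is the equivalence class of upward planar drawings with the same left-to-right orderings of incoming edges and of outgoing edges around each vertex. A single-source digraph has exactly one vertex of indegree zero. If a vertex has two incoming (outgoing) edges, these are its left and right incoming (outgoing) edges according to the embedding. An edge $e=(u,v)$ is bad with respect to face $f$ if either $e$ is the left outgoing edge of $u$ and the left incoming edge of $v$ and $f$ is the face to the right of $e$, or $e$ is the right outgoing edge of $u$ and the right incoming edge of $v$ and $f$ is the face to the left of $e$. *)

theory Defs
  imports "HOL-Analysis.Analysis"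
begin

definition indeg :: "('v \<times> 'v) set \<Rightarrow> 'v \<Rightarrow> nat" where
  "indeg E v = card {u. (u, v) \<in> E}"

definition outdeg :: "('v \<times> 'v) set \<Rightarrow> 'v \<Rightarrow> nat" where
  "outdeg E u = card {v. (u, v) \<in> E}"

definition single_source :: "'v set \<Rightarrow> ('v \<times> 'v) set \<Rightarrow> bool" where
  "single_source V E \<longleftrightarrow> card {v \<in> V. indeg E v = 0} = 1"

definition upward_planar_drawing ::
  "'v set \<Rightarrow> ('v \<times> 'v) set \<Rightarrow> ('v \<Rightarrow> real \<times> real) \<Rightarrow> ('v \<times> 'v \<Rightarrow> real \<Rightarrow> real \<times> real) \<Rightarrow> bool" where
  "upward_planar_drawing V E p \<Gamma> \<longleftrightarrow>
     inj_on p V \<and>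
     (\<forall>e\<in>E. path (\<Gamma> e) \<and> pathstart (\<Gamma> e) = p (fst e) \<and> pathfinish (\<Gamma> e) = p (snd e) \<and>
        (\<forall>s t. 0 \<le> s \<and> s < t \<and> t \<le> 1 \<longrightarrow> snd (\<Gamma> e s) < snd (\<Gamma> e t))) \<and>
     (\<forall>e\<in>E. \<forall>w\<in>V. p w \<in> path_image (\<Gamma> e) \<longrightarrow> w = fst e \<or> w = snd e) \<and>
     (\<forall>e\<in>E. \<forall>e'\<in>E. e \<noteq> e' \<longrightarrow>
        path_image (\<Gamma> e) \<inter> path_image (\<Gamma> e') \<subseteq> p ` ({fst e, snd e} \<inter> {fst e', snd e'}))"

definition upward_planar :: "'v set \<Rightarrow> ('v \<times> 'v) set \<Rightarrow> bool" where
  "upward_planar V E \<longleftrightarrow> (\<exists>p \<Gamma>. upward_planar_drawing V E p \<Gamma>)"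

definition drawing_set ::
  "'v set \<Rightarrow> ('v \<times> 'v) set \<Rightarrow> ('v \<Rightarrow> real \<times> real) \<Rightarrow> ('v \<times> 'v \<Rightarrow> real \<Rightarrow> real \<times> real) \<Rightarrow> (real \<times> real) set" where
  "drawing_set V E p \<Gamma> = p ` V \<union> (\<Union>e\<in>E. path_image (\<Gamma> e))"

definition faces ::
  "'v set \<Rightarrow> ('v \<times> 'v) set \<Rightarrow> ('v \<Rightarrow> real \<times> real) \<Rightarrow> ('v \<times> 'v \<Rightarrow> real \<Rightarrow> real \<times> real) \<Rightarrow> (real \<times> real) set set" where
  "faces V E p \<Gamma> = components (- drawing_set V E p \<Gamma>)"

text \<open>Edge e lies to the left of edge e' just above their common tail
(compared at equal heights), resp. just below their common head.\<close>
definition left_at_start :: "('v \<times> 'v \<Rightarrow> real \<Rightarrow> real \<times> real) \<Rightarrow> 'v \<times> 'v \<Rightarrow> 'v \<times> 'v \<Rightarrow> bool" where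
  "left_at_start \<Gamma> e e' \<longleftrightarrow> (\<exists>\<delta>>0. \<forall>s\<in>{0<..1}. \<forall>t\<in>{0<..1}.
      snd (\<Gamma> e s) = snd (\<Gamma> e' t) \<and> snd (\<Gamma> e s) < snd (\<Gamma> e 0) + \<delta> \<longrightarrow> fst (\<Gamma> e s) < fst (\<Gamma> e' t))"

definition left_at_end :: "('v \<times> 'v \<Rightarrow> real \<Rightarrow> real \<times> real) \<Rightarrow> 'v \<times> 'v \<Rightarrow> 'v \<times> 'v \<Rightarrow> bool" where
  "left_at_end \<Gamma> e e' \<longleftrightarrow> (\<exists>\<delta>>0. \<forall>s\<in>{0..<1}. \<forall>t\<in>{0..<1}.
      snd (\<Gamma> e s) = snd (\<Gamma> e' t) \<and> snd (\<Gamma> e 1) - \<delta> < snd (\<Gamma> e s) \<longrightarrow> fst (\<Gamma> e s) < fst (\<Gamma> e' t))"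

definition left_out :: "('v \<times> 'v) set \<Rightarrow> ('v \<times> 'v \<Rightarrow> real \<Rightarrow> real \<times> real) \<Rightarrow> 'v \<times> 'v \<Rightarrow> bool" where
  "left_out E \<Gamma> e \<longleftrightarrow> (\<exists>e'\<in>E. e' \<noteq> e \<and> fst e' = fst e \<and> left_at_start \<Gamma> e e')"

definition right_out :: "('v \<times> 'v) set \<Rightarrow> ('v \<times> 'v \<Rightarrow> real \<Rightarrow> real \<times> real) \<Rightarrow> 'v \<times> 'v \<Rightarrow> bool" where
  "right_out E \<Gamma> e \<longleftrightarrow> (\<exists>e'\<in>E. e' \<noteq> e \<and> fst e' = fst e \<and> left_at_start \<Gamma> e' e)"

definition left_in :: "('v \<times> 'v) set \<Rightarrow> ('v \<times> 'v \<Rightarrow> real \<Rightarrow> real \<times> real) \<Rightarrow> 'v \<times> 'v \<Rightarrow> bool" where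
  "left_in E \<Gamma> e \<longleftrightarrow> (\<exists>e'\<in>E. e' \<noteq> e \<and> snd e' = snd e \<and> left_at_end \<Gamma> e e')"

definition right_in :: "('v \<times> 'v) set \<Rightarrow> ('v \<times> 'v \<Rightarrow> real \<Rightarrow> real \<times> real) \<Rightarrow> 'v \<times> 'v \<Rightarrow> bool" where
  "right_in E \<Gamma> e \<longleftrightarrow> (\<exists>e'\<in>E. e' \<noteq> e \<and> snd e' = snd e \<and> left_at_end \<Gamma> e' e)"

definition face_right_of :: "('v \<times> 'v \<Rightarrow> real \<Rightarrow> real \<times> real) \<Rightarrow> 'v \<times> 'v \<Rightarrow> (real \<times> real) set \<Rightarrow> bool" where
  "face_right_of \<Gamma> e f \<longleftrightarrow> (\<exists>s\<in>{0<..<1}. \<exists>\<epsilon>>0. \<forall>r\<in>{0<..<\<epsilon>}.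
      (fst (\<Gamma> e s) + r, snd (\<Gamma> e s)) \<in> f)"

definition face_left_of :: "('v \<times> 'v \<Rightarrow> real \<Rightarrow> real \<times> real) \<Rightarrow> 'v \<times> 'v \<Rightarrow> (real \<times> real) set \<Rightarrow> bool" where
  "face_left_of \<Gamma> e f \<longleftrightarrow> (\<exists>s\<in>{0<..<1}. \<exists>\<epsilon>>0. \<forall>r\<in>{0<..<\<epsilon>}.
      (fst (\<Gamma> e s) - r, snd (\<Gamma> e s)) \<in> f)"

definition bad_edge :: "('v \<times> 'v) set \<Rightarrow> ('v \<times> 'v \<Rightarrow> real \<Rightarrow> real \<times> real) \<Rightarrow> 'v \<times> 'v \<Rightarrow> (real \<times> real) set \<Rightarrow> bool" where
  "bad_edge E \<Gamma> e f \<longleftrightarrow>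
     (left_out E \<Gamma> e \<and> left_in E \<Gamma> e \<and> face_right_of \<Gamma> e f) \<or>
     (right_out E \<Gamma> e \<and> right_in E \<Gamma> e \<and> face_left_of \<Gamma> e f)"

end

theory Submission
  imports Defs
begin

text \<open>
  All edges that are bad for a face \<open>f\<close> have the same head; by the indegree bound there are at
  most two of them. If \<open>e = (u, v)\<close> is bad for \<open>f\<close>, then
  just below \<open>v\<close> the face \<open>f\<close> lies between \<open>e\<close> and the other incoming edge \<open>e' = (u', v)\<close>.
  Every vertex is reached from the source \<open>s\<close> by a \<open>y\<close>-monotone curve in the drawing (follow
  incoming edges downwards), so \<open>e\<close> and \<open>e'\<close> extend to two such curves from \<open>s\<close> to \<open>v\<close>.
  The face is connected, avoids both curves and meets the region between them, hence lies
  in that region, and \<open>f\<close> creeps up along \<open>e\<close> so that \<open>v\<close> is in its closure. The head \<open>w\<close> of a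
  second bad edge is then a point of the closed region below \<open>v\<close>, so it is not higher than
  \<open>v\<close>; by symmetry both are equally high, and the only point of the closed region at that height
  is \<open>v\<close> itself.
\<close>

text \<open>Outside \<open>[snd P, snd Q]\<close> the function
  \<open>c\<close> is constant, so that curves can be compared at every height and glued continuously.\<close>
definition ascending_curve :: "(real \<Rightarrow> real) \<Rightarrow> real \<times> real \<Rightarrow> real \<times> real \<Rightarrow> bool" where
  "ascending_curve c P Q \<longleftrightarrow> continuous_on UNIV c \<and> snd P \<le> snd Q \<and>
     (\<forall>h. h \<le> snd P \<longrightarrow> c h = fst P) \<and> (\<forall>h. snd Q \<le> h \<longrightarrow> c h = fst Q)"

definition graph_on :: "(real \<Rightarrow> real) \<Rightarrow> real set \<Rightarrow> (real \<times> real) set" where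
  "graph_on c A = (\<lambda>h. (c h, h)) ` A"

lemma continuous_ascending_image:
  fixes \<phi> :: "real \<Rightarrow> real"
  assumes cont: "continuous_on {0..1} \<phi>"
    and ascending: "\<And>s t. 0 \<le> s \<Longrightarrow> s < t \<Longrightarrow> t \<le> 1 \<Longrightarrow> \<phi> s < \<phi> t"
  shows "inj_on \<phi> {0..1}" and "\<phi> ` {0..1} = {\<phi> 0..\<phi> 1}"
proof -
  show "inj_on \<phi> {0..1}"
    by (rule inj_onI) (metis ascending atLeastAtMost_iff less_irrefl linorder_neq_iff)
  have "\<phi> 0 \<le> \<phi> t \<and> \<phi> t \<le> \<phi> 1" if "t \<in> {0..1}" for t
    using ascending[of 0 t] ascending[of t 1] that by (cases "t = 0"; cases "t = 1") auto
  moreover have "{\<phi> 0..\<phi> 1} \<subseteq> \<phi> ` {0..1}"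
    using IVT'[of \<phi> 0 _ 1] cont by (fastforce simp: image_iff)
  ultimately show "\<phi> ` {0..1} = {\<phi> 0..\<phi> 1}"
    by fastforce
qed

lemma continuous_ascending_clamped_inverse:
  fixes \<phi> :: "real \<Rightarrow> real"
  assumes cont: "continuous_on {0..1} \<phi>"
    and ascending: "\<And>s t. 0 \<le> s \<Longrightarrow> s < t \<Longrightarrow> t \<le> 1 \<Longrightarrow> \<phi> s < \<phi> t"
  obtains \<tau> where "continuous_on UNIV \<tau>" and "\<And>h. \<tau> h \<in> {0..1}"
    and "\<And>t. t \<in> {0..1} \<Longrightarrow> \<tau> (\<phi> t) = t"
    and "\<And>h. h \<le> \<phi> 0 \<Longrightarrow> \<tau> h = 0" and "\<And>h. \<phi> 1 \<le> h \<Longrightarrow> \<tau> h = 1"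
proof -
  note inj = continuous_ascending_image(1)[OF assms]
    and img = continuous_ascending_image(2)[OF assms]
  have le01: "\<phi> 0 \<le> \<phi> 1"
    using ascending[of 0 1] by simp
  define \<psi> where "\<psi> = inv_into {0..1} \<phi>"
  have cont_\<psi>: "continuous_on {\<phi> 0..\<phi> 1} \<psi>"
    using continuous_on_inv[OF cont compact_Icc] inj img unfolding \<psi>_def by auto
  have \<psi>_\<phi>: "\<psi> (\<phi> t) = t" if "t \<in> {0..1}" for t
    unfolding \<psi>_def using inj that by simp
  define clamp where "clamp h = max (\<phi> 0) (min (\<phi> 1) h)" for h
  have clamp_in: "clamp h \<in> {\<phi> 0..\<phi> 1}" for h
    unfolding clamp_def using le01 by auto
  show ?thesis
  proof (rule that[of "\<psi> \<circ> clamp"])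
    show "continuous_on UNIV (\<psi> \<circ> clamp)"
      unfolding clamp_def
      by (rule continuous_on_compose[OF _ continuous_on_subset[OF cont_\<psi>]])
        (use clamp_in[unfolded clamp_def] in \<open>auto intro!: continuous_intros\<close>)
    show "(\<psi> \<circ> clamp) h \<in> {0..1}" for h
    proof -
      have "clamp h \<in> \<phi> ` {0..1}" using clamp_in img by blast
      then show ?thesis unfolding \<psi>_def o_def by (rule inv_into_into)
    qed
    show "(\<psi> \<circ> clamp) (\<phi> t) = t" if "t \<in> {0..1}" for t
    proof -
      have "\<phi> t \<in> {\<phi> 0..\<phi> 1}" using img that by blast
      then show ?thesis unfolding clamp_def using \<psi>_\<phi>[OF that] by simp
    qed
    show "(\<psi> \<circ> clamp) h = 0" if "h \<le> \<phi> 0" for h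
    proof -
      have "clamp h = \<phi> 0" using that le01 unfolding clamp_def by simp
      then show ?thesis using \<psi>_\<phi>[of 0] by simp
    qed
    show "(\<psi> \<circ> clamp) h = 1" if "\<phi> 1 \<le> h" for h
    proof -
      have "clamp h = \<phi> 1" using that le01 unfolding clamp_def by simp
      then show ?thesis using \<psi>_\<phi>[of 1] by simp
    qed
  qed
qed

lemma strictly_ascending_path_graph:
  fixes \<gamma> :: "real \<Rightarrow> real \<times> real"
  assumes "path \<gamma>"
    and ascending: "\<And>s t. 0 \<le> s \<Longrightarrow> s < t \<Longrightarrow> t \<le> 1 \<Longrightarrow> snd (\<gamma> s) < snd (\<gamma> t)"
  obtains c where "ascending_curve c (\<gamma> 0) (\<gamma> 1)"
    and "path_image \<gamma> = graph_on c {snd (\<gamma> 0)..snd (\<gamma> 1)}"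
proof -
  have cont_\<gamma>: "continuous_on {0..1} \<gamma>"
    using \<open>path \<gamma>\<close> by (simp add: path_def)
  then have "continuous_on {0..1} (\<lambda>t. snd (\<gamma> t))"
    by (intro continuous_intros)
  then obtain \<tau> where cont_\<tau>: "continuous_on UNIV \<tau>" and \<tau>_in: "\<And>h. \<tau> h \<in> {0..1}"
    and \<tau>_inv: "\<And>t. t \<in> {0..1} \<Longrightarrow> \<tau> (snd (\<gamma> t)) = t"
    and \<tau>_0: "\<And>h. h \<le> snd (\<gamma> 0) \<Longrightarrow> \<tau> h = 0" and \<tau>_1: "\<And>h. snd (\<gamma> 1) \<le> h \<Longrightarrow> \<tau> h = 1"
    using continuous_ascending_clamped_inverse[of "\<lambda>t. snd (\<gamma> t)"] ascending by blast
  have img: "(\<lambda>t. snd (\<gamma> t)) ` {0..1} = {snd (\<gamma> 0)..snd (\<gamma> 1)}"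
    using continuous_ascending_image(2)[of "\<lambda>t. snd (\<gamma> t)"] \<open>continuous_on {0..1} (\<lambda>t. snd (\<gamma> t))\<close>
      ascending by blast
  define c where "c h = fst (\<gamma> (\<tau> h))" for h
  have "continuous_on UNIV (\<gamma> \<circ> \<tau>)"
    using \<tau>_in by (intro continuous_on_compose cont_\<tau> continuous_on_subset[OF cont_\<gamma>]) auto
  then have "continuous_on UNIV c"
    unfolding c_def by (intro continuous_intros) (simp add: o_def)
  moreover have "snd (\<gamma> 0) \<le> snd (\<gamma> 1)"
    using ascending[of 0 1] by simp
  ultimately have "ascending_curve c (\<gamma> 0) (\<gamma> 1)"
    unfolding ascending_curve_def c_def using \<tau>_0 \<tau>_1 by simp
  moreover have "\<gamma> t = (c (snd (\<gamma> t)), snd (\<gamma> t))" if "t \<in> {0..1}" for t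
    using \<tau>_inv[OF that] unfolding c_def by simp
  then have "path_image \<gamma> = graph_on c {snd (\<gamma> 0)..snd (\<gamma> 1)}"
    unfolding path_image_def graph_on_def img[symmetric] image_image by (intro image_cong) auto
  ultimately show ?thesis
    using that by blast
qed

lemma ascending_curve_ends:
  assumes "ascending_curve c P Q"
  shows "c (snd P) = fst P" and "c (snd Q) = fst Q"
  using assms unfolding ascending_curve_def by auto

definition join_curves :: "(real \<Rightarrow> real) \<Rightarrow> real \<Rightarrow> (real \<Rightarrow> real) \<Rightarrow> real \<Rightarrow> real" where
  "join_curves c y d = (\<lambda>h. c (min h y) + d (max h y) - c y)"

lemma
  assumes c: "ascending_curve c P Q" and d: "ascending_curve d Q R"
  shows join_curves_below: "h \<le> snd Q \<Longrightarrow> join_curves c (snd Q) d h = c h"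
    and join_curves_above: "snd Q \<le> h \<Longrightarrow> join_curves c (snd Q) d h = d h"
    and ascending_curve_join: "ascending_curve (join_curves c (snd Q) d) P R"
proof -
  show below: "join_curves c (snd Q) d h = c h" if "h \<le> snd Q" for h
    using that c d unfolding join_curves_def ascending_curve_def by auto
  show above: "join_curves c (snd Q) d h = d h" if "snd Q \<le> h" for h
    using that c d unfolding join_curves_def ascending_curve_def by auto
  have "continuous_on UNIV c" "continuous_on UNIV d"
    using c d unfolding ascending_curve_def by auto
  then have "continuous_on UNIV (join_curves c (snd Q) d)"
    unfolding join_curves_def
    by (intro continuous_intros continuous_on_compose2[of UNIV c _ "\<lambda>h. min h (snd Q)"]
        continuous_on_compose2[of UNIV d _ "\<lambda>h. max h (snd Q)"]) auto
  moreover have "snd P \<le> snd Q" "snd Q \<le> snd R"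
    using c d unfolding ascending_curve_def by auto
  moreover have "join_curves c (snd Q) d h = fst P" if "h \<le> snd P" for h
    using below[of h] c that \<open>snd P \<le> snd Q\<close> unfolding ascending_curve_def by simp
  moreover have "join_curves c (snd Q) d h = fst R" if "snd R \<le> h" for h
    using above[of h] d that \<open>snd Q \<le> snd R\<close> unfolding ascending_curve_def by simp
  ultimately show "ascending_curve (join_curves c (snd Q) d) P R"
    unfolding ascending_curve_def by auto
qed

lemma graph_on_join_curves:
  assumes "ascending_curve c P Q" and "ascending_curve d Q R"
  shows "graph_on (join_curves c (snd Q) d) {snd P..snd R}
    \<subseteq> graph_on c {snd P..snd Q} \<union> graph_on d {snd Q..snd R}"
proof
  fix z assume "z \<in> graph_on (join_curves c (snd Q) d) {snd P..snd R}"
  then obtain h where h: "h \<in> {snd P..snd R}" "z = (join_curves c (snd Q) d h, h)"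
    unfolding graph_on_def by blast
  show "z \<in> graph_on c {snd P..snd Q} \<union> graph_on d {snd Q..snd R}"
  proof (cases "h \<le> snd Q")
    case True
    then show ?thesis
      using h join_curves_below[OF assms] unfolding graph_on_def by auto
  next
    case False
    then show ?thesis
      using h join_curves_above[OF assms] unfolding graph_on_def by auto
  qed
qed

definition open_strip :: "(real \<Rightarrow> real) \<Rightarrow> (real \<Rightarrow> real) \<Rightarrow> real \<Rightarrow> real \<Rightarrow> (real \<times> real) set" where
  "open_strip a b y0 y1 = {z. y0 < snd z \<and> snd z < y1 \<and>
     min (a (snd z)) (b (snd z)) < fst z \<and> fst z < max (a (snd z)) (b (snd z))}"

definition closed_strip :: "(real \<Rightarrow> real) \<Rightarrow> (real \<Rightarrow> real) \<Rightarrow> real \<Rightarrow> real \<Rightarrow> (real \<times> real) set" where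
  "closed_strip a b y0 y1 = {z. y0 \<le> snd z \<and> snd z \<le> y1 \<and>
     min (a (snd z)) (b (snd z)) \<le> fst z \<and> fst z \<le> max (a (snd z)) (b (snd z))}"

lemma
  assumes "continuous_on UNIV a" and "continuous_on UNIV b"
  shows open_open_strip: "open (open_strip a b y0 y1)"
    and closed_closed_strip: "closed (closed_strip a b y0 y1)"
proof -
  have "continuous_on UNIV (\<lambda>z::real \<times> real. min (a (snd z)) (b (snd z)))"
    "continuous_on UNIV (\<lambda>z::real \<times> real. max (a (snd z)) (b (snd z)))"
    by (intro continuous_intros continuous_on_compose2[OF assms(1)] continuous_on_compose2[OF assms(2)];
        simp)+
  moreover have "open_strip a b y0 y1 = {z. y0 < snd z} \<inter> {z. snd z < y1} \<inter>
      {z. min (a (snd z)) (b (snd z)) < fst z} \<inter> {z. fst z < max (a (snd z)) (b (snd z))}"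
    "closed_strip a b y0 y1 = {z. y0 \<le> snd z} \<inter> {z. snd z \<le> y1} \<inter>
      {z. min (a (snd z)) (b (snd z)) \<le> fst z} \<inter> {z. fst z \<le> max (a (snd z)) (b (snd z))}"
    unfolding open_strip_def closed_strip_def by auto
  ultimately show "open (open_strip a b y0 y1)" "closed (closed_strip a b y0 y1)"
    by (auto intro!: open_Int open_Collect_less closed_Int closed_Collect_le continuous_intros)
qed

lemma open_strip_subset_closed_strip: "open_strip a b y0 y1 \<subseteq> closed_strip a b y0 y1"
  unfolding open_strip_def closed_strip_def by auto

lemma closed_strip_diff_open_strip:
  assumes "ascending_curve a P Q" and "ascending_curve b P Q"
  shows "closed_strip a b (snd P) (snd Q) - open_strip a b (snd P) (snd Q)
    \<subseteq> graph_on a {snd P..snd Q} \<union> graph_on b {snd P..snd Q}"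
proof
  fix z assume z: "z \<in> closed_strip a b (snd P) (snd Q) - open_strip a b (snd P) (snd Q)"
  have ends: "a (snd P) = b (snd P)" "a (snd Q) = b (snd Q)"
    using ascending_curve_ends[OF assms(1)] ascending_curve_ends[OF assms(2)] by simp_all
  have "fst z = min (a (snd z)) (b (snd z)) \<or> fst z = max (a (snd z)) (b (snd z))"
  proof (cases "snd z = snd P \<or> snd z = snd Q")
    case True
    then have "min (a (snd z)) (b (snd z)) = max (a (snd z)) (b (snd z))"
      using ends by auto
    then show ?thesis using z unfolding closed_strip_def by auto
  next
    case False
    then show ?thesis using z unfolding closed_strip_def open_strip_def by auto
  qed
  then have "fst z = a (snd z) \<or> fst z = b (snd z)"
    by (cases "a (snd z) \<le> b (snd z)") (auto simp: min_def max_def)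
  moreover have "snd z \<in> {snd P..snd Q}"
    using z unfolding closed_strip_def by auto
  ultimately show "z \<in> graph_on a {snd P..snd Q} \<union> graph_on b {snd P..snd Q}"
    unfolding graph_on_def by (auto simp: image_iff prod_eq_iff)
qed

lemma closed_strip_top:
  assumes "ascending_curve a P Q" and "ascending_curve b P Q"
    and "z \<in> closed_strip a b (snd P) (snd Q)" and "snd Q \<le> snd z"
  shows "z = Q"
proof -
  have "snd z = snd Q"
    using assms(3,4) unfolding closed_strip_def by auto
  then show ?thesis
    using assms(3) ascending_curve_ends[OF assms(1)] ascending_curve_ends[OF assms(2)]
    unfolding closed_strip_def by (auto simp: prod_eq_iff)
qed

lemma connected_subset_open_strip:
  assumes a: "ascending_curve a P Q" and b: "ascending_curve b P Q"
    and "connected S"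
    and avoid: "S \<inter> (graph_on a {snd P..snd Q} \<union> graph_on b {snd P..snd Q}) = {}"
    and meets: "S \<inter> open_strip a b (snd P) (snd Q) \<noteq> {}"
  shows "S \<subseteq> open_strip a b (snd P) (snd Q)"
proof -
  have cont: "continuous_on UNIV a" "continuous_on UNIV b"
    using a b unfolding ascending_curve_def by auto
  let ?O = "open_strip a b (snd P) (snd Q)" and ?C = "closed_strip a b (snd P) (snd Q)"
  have "S \<subseteq> ?O \<union> - ?C"
    using avoid closed_strip_diff_open_strip[OF a b] by blast
  moreover have "?O \<inter> - ?C \<inter> S = {}"
    using open_strip_subset_closed_strip by blast
  ultimately have "?O \<inter> S = {} \<or> - ?C \<inter> S = {}"
    using connectedD[OF \<open>connected S\<close> open_open_strip[OF cont] open_Compl[OF closed_closed_strip[OF cont]]]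
    by blast
  then show ?thesis
    using meets \<open>S \<subseteq> ?O \<union> - ?C\<close> by blast
qed

lemma closure_subset_closed_strip:
  assumes "continuous_on UNIV a" and "continuous_on UNIV b"
    and "S \<subseteq> open_strip a b y0 y1"
  shows "closure S \<subseteq> closed_strip a b y0 y1"
  using assms open_strip_subset_closed_strip closed_closed_strip
  by (metis closure_minimal order_trans)

lemma dist_Pair_le_abs_sum:
  fixes a b c d :: real
  shows "dist (a, b) (c, d) \<le> \<bar>a - c\<bar> + \<bar>b - d\<bar>"
  unfolding dist_Pair_Pair dist_real_def using sqrt_sum_squares_le_sum_abs[of "a - c" "b - d"] by simp

lemma shifted_towards_strictly_between:
  fixes \<sigma> x x' r :: real
  assumes "\<bar>\<sigma>\<bar> = 1" and "0 < \<sigma> * (x' - x)" and "0 < r" and "r < \<bar>x' - x\<bar>"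
  shows "min x x' < x + \<sigma> * r" and "x + \<sigma> * r < max x x'"
proof -
  have "\<sigma> = 1 \<or> \<sigma> = -1"
    using assms(1) by (simp add: abs_if split: if_splits)
  then have "min x x' < x + \<sigma> * r \<and> x + \<sigma> * r < max x x'"
    using assms(2-4) by (elim disjE) (simp_all add: min_def max_def)
  then show "min x x' < x + \<sigma> * r" and "x + \<sigma> * r < max x x'"
    by simp_all
qed

lemma card_in_edges_le_indeg:
  assumes "finite E" and "B \<subseteq> {e \<in> E. snd e = v}"
  shows "card B \<le> indeg E v"
proof -
  have "card B \<le> card {e \<in> E. snd e = v}"
    using assms by (intro card_mono) auto
  also have "{e \<in> E. snd e = v} = (\<lambda>u. (u, v)) ` {u. (u, v) \<in> E}"
    by force
  also have "card \<dots> = indeg E v"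
    unfolding indeg_def by (rule card_image) (auto intro: inj_onI)
  finally show ?thesis .
qed

locale upward_drawing =
  fixes V :: "'v set" and E :: "('v \<times> 'v) set" and p :: "'v \<Rightarrow> real \<times> real"
    and \<Gamma> :: "'v \<times> 'v \<Rightarrow> real \<Rightarrow> real \<times> real"
  assumes finite_vertices: "finite V" and edges_subset: "E \<subseteq> V \<times> V"
    and drawing: "upward_planar_drawing V E p \<Gamma>"
begin

lemma edge_path: "e \<in> E \<Longrightarrow> path (\<Gamma> e)"
  and edge_start: "e \<in> E \<Longrightarrow> \<Gamma> e 0 = p (fst e)"
  and edge_finish: "e \<in> E \<Longrightarrow> \<Gamma> e 1 = p (snd e)"
  and edge_ascending: "e \<in> E \<Longrightarrow> 0 \<le> s \<Longrightarrow> s < t \<Longrightarrow> t \<le> 1 \<Longrightarrow> snd (\<Gamma> e s) < snd (\<Gamma> e t)"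
  and vertex_on_edge: "e \<in> E \<Longrightarrow> w \<in> V \<Longrightarrow> p w \<in> path_image (\<Gamma> e) \<Longrightarrow> w = fst e \<or> w = snd e"
  and edges_meet_at_ends: "e \<in> E \<Longrightarrow> e' \<in> E \<Longrightarrow> e \<noteq> e' \<Longrightarrow>
     path_image (\<Gamma> e) \<inter> path_image (\<Gamma> e') \<subseteq> p ` ({fst e, snd e} \<inter> {fst e', snd e'})"
  and inj_on_vertices: "inj_on p V"
  using drawing unfolding upward_planar_drawing_def pathstart_def pathfinish_def by auto

lemma tail_below_head: "e \<in> E \<Longrightarrow> snd (p (fst e)) < snd (p (snd e))"
  using edge_ascending[of e 0 1] edge_start edge_finish by auto

lemma finite_edges: "finite E"
  using finite_vertices edges_subset by (meson finite_SigmaI finite_subset)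

definition edge_curve :: "'v \<times> 'v \<Rightarrow> (real \<Rightarrow> real) \<Rightarrow> bool" where
  "edge_curve e c \<longleftrightarrow> ascending_curve c (p (fst e)) (p (snd e)) \<and>
     path_image (\<Gamma> e) = graph_on c {snd (p (fst e))..snd (p (snd e))}"

lemma edge_curve_exists:
  assumes "e \<in> E"
  obtains c where "edge_curve e c"
  using strictly_ascending_path_graph[OF edge_path[OF assms] edge_ascending[OF assms]] that
  unfolding edge_curve_def edge_start[OF assms] edge_finish[OF assms] by blast

lemma edge_curve_point:
  assumes "edge_curve e c" and "t \<in> {0..1}"
  shows "fst (\<Gamma> e t) = c (snd (\<Gamma> e t))"
proof -
  have "\<Gamma> e t \<in> graph_on c {snd (p (fst e))..snd (p (snd e))}"
    using assms unfolding edge_curve_def path_image_def by blast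
  then show ?thesis unfolding graph_on_def by auto
qed

lemma edge_curve_below_head:
  assumes "e \<in> E" and "edge_curve e c" and "h \<in> {snd (p (fst e))..<snd (p (snd e))}"
  obtains t where "t \<in> {0..<1}" and "\<Gamma> e t = (c h, h)"
proof -
  have "(c h, h) \<in> path_image (\<Gamma> e)"
    using assms(2,3) unfolding edge_curve_def graph_on_def by auto
  then obtain t where t: "t \<in> {0..1}" "\<Gamma> e t = (c h, h)"
    unfolding path_image_def by auto
  moreover have "t \<noteq> 1"
    using t assms(3) edge_finish[OF assms(1)] by auto
  ultimately show ?thesis using that by (auto simp: less_le)
qed

definition drawn_curve :: "(real \<Rightarrow> real) \<Rightarrow> 'v \<Rightarrow> 'v \<Rightarrow> bool" where
  "drawn_curve c u v \<longleftrightarrow> ascending_curve c (p u) (p v) \<and>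
     graph_on c {snd (p u)..snd (p v)} \<subseteq> drawing_set V E p \<Gamma>"

lemma drawn_curve_edge:
  assumes "e \<in> E" and "edge_curve e c"
  shows "drawn_curve c (fst e) (snd e)"
  using assms unfolding drawn_curve_def edge_curve_def drawing_set_def by auto

lemma drawn_curve_join:
  assumes "drawn_curve c u v" and "drawn_curve d v w"
  shows "drawn_curve (join_curves c (snd (p v)) d) u w"
proof -
  have c: "ascending_curve c (p u) (p v)" and d: "ascending_curve d (p v) (p w)"
    using assms unfolding drawn_curve_def by auto
  have "graph_on c {snd (p u)..snd (p v)} \<subseteq> drawing_set V E p \<Gamma>"
    "graph_on d {snd (p v)..snd (p w)} \<subseteq> drawing_set V E p \<Gamma>"
    using assms unfolding drawn_curve_def by auto
  then show ?thesis
    using ascending_curve_join[OF c d] graph_on_join_curves[OF c d]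
    unfolding drawn_curve_def by blast
qed

lemma drawn_curves_from_source:
  assumes "single_source V E"
  obtains s where "s \<in> V" and "\<And>v. v \<in> V \<Longrightarrow> \<exists>c. drawn_curve c s v"
proof -
  obtain s where sources: "{v \<in> V. indeg E v = 0} = {s}"
    using assms unfolding single_source_def by (rule card_1_singletonE)
  then have "s \<in> V" by blast
  have "\<exists>c. drawn_curve c s v" if "v \<in> V" for v
    using that
  proof (induction "card {w \<in> V. snd (p w) < snd (p v)}" arbitrary: v rule: less_induct)
    case less
    show ?case
    proof (cases "v = s")
      case True
      have "drawn_curve (\<lambda>_. fst (p s)) s s"
        using \<open>s \<in> V\<close> unfolding drawn_curve_def ascending_curve_def graph_on_def drawing_set_def
        by auto
      then show ?thesis using True by blast
    next
      case False
      then have "v \<notin> {v \<in> V. indeg E v = 0}"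
        using sources by simp
      then have "indeg E v \<noteq> 0"
        using less.prems by simp
      then obtain u where uv: "(u, v) \<in> E"
        unfolding indeg_def by (metis Collect_empty_eq card.empty)
      then have "u \<in> V" using edges_subset by auto
      have "{w \<in> V. snd (p w) < snd (p u)} \<subset> {w \<in> V. snd (p w) < snd (p v)}"
        using tail_below_head[OF uv] \<open>u \<in> V\<close> by auto
      then have "card {w \<in> V. snd (p w) < snd (p u)} < card {w \<in> V. snd (p w) < snd (p v)}"
        using finite_vertices by (simp add: psubset_card_mono)
      then obtain c where "drawn_curve c s u"
        using less.hyps \<open>u \<in> V\<close> by blast
      moreover obtain d where "edge_curve (u, v) d"
        using edge_curve_exists[OF uv] .
      ultimately have "drawn_curve (join_curves c (snd (p u)) d) s v"
        using drawn_curve_join drawn_curve_edge[OF uv] by simp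
      then show ?thesis by blast
    qed
  qed
  then show ?thesis using that \<open>s \<in> V\<close> by blast
qed

lemma face_subset_complement: "f \<in> faces V E p \<Gamma> \<Longrightarrow> f \<subseteq> - drawing_set V E p \<Gamma>"
  unfolding faces_def using in_components_subset by blast

lemma face_in_open_strip:
  assumes a: "drawn_curve a s v" and b: "drawn_curve b s v" and f: "f \<in> faces V E p \<Gamma>"
    and meets: "f \<inter> open_strip a b (snd (p s)) (snd (p v)) \<noteq> {}"
  shows "f \<subseteq> open_strip a b (snd (p s)) (snd (p v))"
proof (rule connected_subset_open_strip[OF _ _ _ _ meets])
  show "ascending_curve a (p s) (p v)" "ascending_curve b (p s) (p v)"
    using a b unfolding drawn_curve_def by auto
  show "connected f"
    using f unfolding faces_def by (rule in_components_connected)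
  show "f \<inter> (graph_on a {snd (p s)..snd (p v)} \<union> graph_on b {snd (p s)..snd (p v)}) = {}"
  proof -
    have "graph_on a {snd (p s)..snd (p v)} \<subseteq> drawing_set V E p \<Gamma>"
      "graph_on b {snd (p s)..snd (p v)} \<subseteq> drawing_set V E p \<Gamma>"
      using a b unfolding drawn_curve_def by auto
    then show ?thesis
      using face_subset_complement[OF f] by blast
  qed
qed

lemma edge_interior_unshared:
  assumes e: "e \<in> E" and z: "z \<in> path_image (\<Gamma> e)"
    and "snd (p (fst e)) < snd z" and "snd z < snd (p (snd e))"
  shows "z \<notin> p ` V \<union> (\<Union>e'\<in>E - {e}. path_image (\<Gamma> e'))"
proof -
  have ends: "z \<noteq> p (fst e)" "z \<noteq> p (snd e)"
    using assms(3,4) by auto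
  have "z \<notin> p ` V"
    using vertex_on_edge[OF e] z ends by blast
  moreover have "z \<notin> path_image (\<Gamma> e')" if "e' \<in> E - {e}" for e'
    using edges_meet_at_ends[OF e, of e'] that z ends by blast
  ultimately show ?thesis by blast
qed

lemma edge_band_avoids_drawing:
  assumes e: "e \<in> E" and c: "edge_curve e c"
    and h0: "snd (p (fst e)) < h0" and h1: "h1 < snd (p (snd e))"
  obtains \<delta> where "\<delta> > 0"
    and "\<And>h r. h \<in> {h0..h1} \<Longrightarrow> 0 < \<bar>r\<bar> \<Longrightarrow> \<bar>r\<bar> < \<delta> \<Longrightarrow> (c h + r, h) \<notin> drawing_set V E p \<Gamma>"
proof -
  let ?K = "graph_on c {h0..h1}" and ?O = "p ` V \<union> (\<Union>e'\<in>E - {e}. path_image (\<Gamma> e'))"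
  have cont: "continuous_on UNIV c"
    using c unfolding edge_curve_def ascending_curve_def by auto
  have "continuous_on UNIV (\<lambda>h. (c h, h))"
    by (intro continuous_intros cont)
  then have "compact ?K"
    unfolding graph_on_def
    by (rule compact_continuous_image[OF continuous_on_subset compact_Icc]) simp
  moreover have "closed ?O"
    using finite_vertices finite_edges edge_path
    by (intro closed_Un closed_UN finite_imp_closed) (auto simp: closed_path_image)
  moreover have "?K \<inter> ?O = {}"
  proof -
    have "?K \<subseteq> path_image (\<Gamma> e)"
      using c h0 h1 unfolding edge_curve_def graph_on_def by auto
    then show ?thesis
      using edge_interior_unshared[OF e] h0 h1 unfolding graph_on_def by fastforce
  qed
  ultimately obtain \<delta> where \<delta>: "\<delta> > 0" "\<And>x y. x \<in> ?K \<Longrightarrow> y \<in> ?O \<Longrightarrow> \<delta> \<le> dist x y"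
    using separate_compact_closed by metis
  show ?thesis
  proof (rule that[OF \<delta>(1)])
    fix h r assume h: "h \<in> {h0..h1}" and r: "0 < \<bar>r\<bar>" "\<bar>r\<bar> < \<delta>"
    have "(c h, h) \<in> ?K"
      using h unfolding graph_on_def by blast
    moreover have "dist (c h, h) (c h + r, h) < \<delta>"
      using r by (simp add: dist_Pair_Pair dist_real_def)
    ultimately have "(c h + r, h) \<notin> ?O"
      using \<delta>(2) by fastforce
    moreover have "(c h + r, h) \<notin> path_image (\<Gamma> e)"
      using c r unfolding edge_curve_def graph_on_def by auto
    ultimately show "(c h + r, h) \<notin> drawing_set V E p \<Gamma>"
      unfolding drawing_set_def by blast
  qed
qed

lemma face_beside_edge:
  assumes e: "e \<in> E" and c: "edge_curve e c" and f: "f \<in> faces V E p \<Gamma>" and \<sigma>: "\<bar>\<sigma>\<bar> = 1"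
    and h0: "snd (p (fst e)) < h0" and "h0 \<le> h1" and h1: "h1 < snd (p (snd e))"
    and "\<epsilon> > 0" and side: "\<And>r. r \<in> {0<..<\<epsilon>} \<Longrightarrow> (c h0 + \<sigma> * r, h0) \<in> f"
  obtains \<delta> where "\<delta> > 0" and "\<And>h r. h \<in> {h0..h1} \<Longrightarrow> r \<in> {0<..<\<delta>} \<Longrightarrow> (c h + \<sigma> * r, h) \<in> f"
proof -
  obtain \<delta> where \<delta>: "\<delta> > 0"
    and avoid: "\<And>h r. h \<in> {h0..h1} \<Longrightarrow> 0 < \<bar>r\<bar> \<Longrightarrow> \<bar>r\<bar> < \<delta> \<Longrightarrow> (c h + r, h) \<notin> drawing_set V E p \<Gamma>"
    using edge_band_avoids_drawing[OF e c h0 h1] by blast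
  define T where "T = (\<lambda>x. (c (fst x) + \<sigma> * snd x, fst x)) ` ({h0..h1} \<times> {0<..<\<delta>})"
  have cont: "continuous_on UNIV c"
    using c unfolding edge_curve_def ascending_curve_def by auto
  have "continuous_on UNIV (\<lambda>x::real \<times> real. (c (fst x) + \<sigma> * snd x, fst x))"
    by (intro continuous_intros continuous_on_compose2[OF cont]) auto
  then have "connected T"
    unfolding T_def
    by (rule connected_continuous_image[OF continuous_on_subset])
      (auto intro: convex_connected convex_Times)
  moreover have "T \<subseteq> - drawing_set V E p \<Gamma>"
    using avoid \<sigma> unfolding T_def by (auto simp: abs_mult)
  moreover have "f \<inter> T \<noteq> {}"
  proof -
    define r where "r = min \<epsilon> \<delta> / 2"
    have "r \<in> {0<..<\<epsilon>}" "r \<in> {0<..<\<delta>}"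
      using \<open>\<epsilon> > 0\<close> \<delta> unfolding r_def by auto
    then have "(c h0 + \<sigma> * r, h0) \<in> f \<inter> T"
      using side \<open>h0 \<le> h1\<close> unfolding T_def by (auto intro!: image_eqI[of _ _ "(h0, r)"])
    then show ?thesis by blast
  qed
  ultimately have "T \<subseteq> f"
    using components_maximal[of f "- drawing_set V E p \<Gamma>" T] f unfolding faces_def by blast
  then show ?thesis
    using that[OF \<delta>] unfolding T_def by force
qed

lemma left_at_end_curves:
  assumes e1: "e1 \<in> E" and e2: "e2 \<in> E" and head: "snd e1 = snd e2"
    and c1: "edge_curve e1 c1" and c2: "edge_curve e2 c2" and left: "left_at_end \<Gamma> e1 e2"
  obtains \<delta> where "\<delta> > 0"
    and "\<And>h. snd (p (snd e1)) - \<delta> < h \<Longrightarrow> h < snd (p (snd e1)) \<Longrightarrow>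
      snd (p (fst e1)) \<le> h \<Longrightarrow> snd (p (fst e2)) \<le> h \<Longrightarrow> c1 h < c2 h"
proof -
  obtain \<delta> where \<delta>: "\<delta> > 0" and below: "\<forall>s\<in>{0..<1}. \<forall>t\<in>{0..<1}.
      snd (\<Gamma> e1 s) = snd (\<Gamma> e2 t) \<and> snd (\<Gamma> e1 1) - \<delta> < snd (\<Gamma> e1 s) \<longrightarrow> fst (\<Gamma> e1 s) < fst (\<Gamma> e2 t)"
    using left unfolding left_at_end_def by blast
  show ?thesis
  proof (rule that[OF \<delta>])
    fix h assume h: "snd (p (snd e1)) - \<delta> < h" "h < snd (p (snd e1))"
      "snd (p (fst e1)) \<le> h" "snd (p (fst e2)) \<le> h"
    obtain s where "s \<in> {0..<1}" "\<Gamma> e1 s = (c1 h, h)"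
      using edge_curve_below_head[OF e1 c1, of h] h by auto
    moreover obtain t where "t \<in> {0..<1}" "\<Gamma> e2 t = (c2 h, h)"
      using edge_curve_below_head[OF e2 c2, of h] h head by auto
    ultimately show "c1 h < c2 h"
      using below h edge_finish[OF e1] by force
  qed
qed

lemma face_side_of_edge:
  assumes e: "e \<in> E" and c: "edge_curve e c"
    and side: "\<exists>s\<in>{0<..<1}. \<exists>\<epsilon>>0. \<forall>r\<in>{0<..<\<epsilon>}. (fst (\<Gamma> e s) + \<sigma> * r, snd (\<Gamma> e s)) \<in> f"
  obtains h0 \<epsilon> where "snd (p (fst e)) < h0" and "h0 < snd (p (snd e))" and "\<epsilon> > 0"
    and "\<And>r. r \<in> {0<..<\<epsilon>} \<Longrightarrow> (c h0 + \<sigma> * r, h0) \<in> f"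
proof -
  obtain s \<epsilon> where s: "s \<in> {0<..<1}" and "\<epsilon> > 0"
    and side_s: "\<forall>r\<in>{0<..<\<epsilon>}. (fst (\<Gamma> e s) + \<sigma> * r, snd (\<Gamma> e s)) \<in> f"
    using side by blast
  show ?thesis
  proof (rule that[OF _ _ \<open>\<epsilon> > 0\<close>])
    show "snd (p (fst e)) < snd (\<Gamma> e s)" "snd (\<Gamma> e s) < snd (p (snd e))"
      using edge_ascending[OF e, of 0 s] edge_ascending[OF e, of s 1] s
        edge_start[OF e] edge_finish[OF e] by auto
    show "(c (snd (\<Gamma> e s)) + \<sigma> * r, snd (\<Gamma> e s)) \<in> f" if "r \<in> {0<..<\<epsilon>}" for r
      using side_s that edge_curve_point[OF c, of s] s by auto
  qed
qed

lemma other_incoming_edge: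
  assumes e: "e \<in> E" and c: "edge_curve e c"
    and orientation: "left_in E \<Gamma> e \<and> \<sigma> = 1 \<or> right_in E \<Gamma> e \<and> \<sigma> = -1"
  obtains e' c' \<delta> where "e' \<in> E" and "snd e' = snd e" and "edge_curve e' c'" and "\<delta> > 0"
    and "\<And>h. snd (p (snd e)) - \<delta> < h \<Longrightarrow> h < snd (p (snd e)) \<Longrightarrow>
      snd (p (fst e)) \<le> h \<Longrightarrow> snd (p (fst e')) \<le> h \<Longrightarrow> 0 < \<sigma> * (c' h - c h)"
  using orientation
proof (elim disjE conjE)
  assume "left_in E \<Gamma> e" and "\<sigma> = 1"
  then obtain e' where e': "e' \<in> E" "snd e' = snd e" "left_at_end \<Gamma> e e'"
    unfolding left_in_def by auto
  obtain c' where c': "edge_curve e' c'"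
    using edge_curve_exists[OF e'(1)] .
  obtain \<delta> where "\<delta> > 0" and order: "\<And>h. snd (p (snd e)) - \<delta> < h \<Longrightarrow> h < snd (p (snd e)) \<Longrightarrow>
      snd (p (fst e)) \<le> h \<Longrightarrow> snd (p (fst e')) \<le> h \<Longrightarrow> c h < c' h"
    using left_at_end_curves[OF e e'(1) e'(2)[symmetric] c c' e'(3)] by blast
  show ?thesis
    by (rule that[OF e'(1,2) c' \<open>\<delta> > 0\<close>]) (simp add: \<open>\<sigma> = 1\<close> order)
next
  assume "right_in E \<Gamma> e" and "\<sigma> = -1"
  then obtain e' where e': "e' \<in> E" "snd e' = snd e" "left_at_end \<Gamma> e' e"
    unfolding right_in_def by auto
  obtain c' where c': "edge_curve e' c'"
    using edge_curve_exists[OF e'(1)] .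
  obtain \<delta> where "\<delta> > 0" and order: "\<And>h. snd (p (snd e)) - \<delta> < h \<Longrightarrow> h < snd (p (snd e)) \<Longrightarrow>
      snd (p (fst e')) \<le> h \<Longrightarrow> snd (p (fst e)) \<le> h \<Longrightarrow> c' h < c h"
    using left_at_end_curves[OF e'(1) e e'(2) c' c e'(3)] e'(2) by auto
  show ?thesis
    by (rule that[OF e'(1,2) c' \<open>\<delta> > 0\<close>]) (simp add: \<open>\<sigma> = -1\<close> order)
qed

lemma bad_edge_sides:
  assumes e: "e \<in> E" and bad: "bad_edge E \<Gamma> e f"
  obtains \<sigma> e' c c' h0 \<epsilon> \<delta> where "\<bar>\<sigma>\<bar> = 1" and "e' \<in> E" and "snd e' = snd e"
    and "edge_curve e c" and "edge_curve e' c'"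
    and "snd (p (fst e)) < h0" and "h0 < snd (p (snd e))"
    and "\<epsilon> > 0" and "\<And>r. r \<in> {0<..<\<epsilon>} \<Longrightarrow> (c h0 + \<sigma> * r, h0) \<in> f"
    and "\<delta> > 0" and "\<And>h. snd (p (snd e)) - \<delta> < h \<Longrightarrow> h < snd (p (snd e)) \<Longrightarrow>
      snd (p (fst e)) \<le> h \<Longrightarrow> snd (p (fst e')) \<le> h \<Longrightarrow> 0 < \<sigma> * (c' h - c h)"
proof -
  obtain \<sigma> :: real where \<sigma>: "\<bar>\<sigma>\<bar> = 1"
    and orientation: "left_in E \<Gamma> e \<and> \<sigma> = 1 \<or> right_in E \<Gamma> e \<and> \<sigma> = -1"
    and side: "\<exists>s\<in>{0<..<1}. \<exists>\<epsilon>>0. \<forall>r\<in>{0<..<\<epsilon>}. (fst (\<Gamma> e s) + \<sigma> * r, snd (\<Gamma> e s)) \<in> f"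
  proof -
    consider "left_in E \<Gamma> e" "face_right_of \<Gamma> e f" | "right_in E \<Gamma> e" "face_left_of \<Gamma> e f"
      using bad unfolding bad_edge_def by blast
    then show ?thesis
    proof cases
      case 1
      then show ?thesis using that[of 1] unfolding face_right_of_def by simp
    next
      case 2
      then show ?thesis using that[of "-1"] unfolding face_left_of_def by simp
    qed
  qed
  obtain c where c: "edge_curve e c"
    using edge_curve_exists[OF e] .
  obtain e' c' \<delta> where e': "e' \<in> E" "snd e' = snd e" and c': "edge_curve e' c'" and "\<delta> > 0"
    and order: "\<And>h. snd (p (snd e)) - \<delta> < h \<Longrightarrow> h < snd (p (snd e)) \<Longrightarrow>
      snd (p (fst e)) \<le> h \<Longrightarrow> snd (p (fst e')) \<le> h \<Longrightarrow> 0 < \<sigma> * (c' h - c h)"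
    using other_incoming_edge[OF e c orientation] by blast
  obtain h0 \<epsilon> where h0: "snd (p (fst e)) < h0" "h0 < snd (p (snd e))" and "\<epsilon> > 0"
    and side_h0: "\<And>r. r \<in> {0<..<\<epsilon>} \<Longrightarrow> (c h0 + \<sigma> * r, h0) \<in> f"
    using face_side_of_edge[OF e c side] by blast
  show ?thesis
    by (rule that[OF \<sigma> e' c c' h0 \<open>\<epsilon> > 0\<close> side_h0 \<open>\<delta> > 0\<close> order])
qed

lemma head_in_closure_of_face_beside_edge:
  assumes e: "e \<in> E" and c: "edge_curve e c" and f: "f \<in> faces V E p \<Gamma>" and \<sigma>: "\<bar>\<sigma>\<bar> = 1"
    and h0: "snd (p (fst e)) < h0" "h0 < snd (p (snd e))"
    and "\<epsilon> > 0" and side: "\<And>r. r \<in> {0<..<\<epsilon>} \<Longrightarrow> (c h0 + \<sigma> * r, h0) \<in> f"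
  shows "p (snd e) \<in> closure f"
  unfolding closure_approachable
proof (intro allI impI)
  fix \<epsilon>' :: real assume "\<epsilon>' > 0"
  define x y where "x = fst (p (snd e))" and "y = snd (p (snd e))"
  have asc: "ascending_curve c (p (fst e)) (p (snd e))"
    using c unfolding edge_curve_def by simp
  then have "isCont c y"
    unfolding ascending_curve_def by (simp add: continuous_on_eq_continuous_at)
  moreover have "\<epsilon>' / 3 > 0"
    using \<open>\<epsilon>' > 0\<close> by simp
  ultimately obtain \<eta> where "\<eta> > 0" and \<eta>: "\<And>h. \<bar>h - y\<bar> < \<eta> \<Longrightarrow> \<bar>c h - c y\<bar> < \<epsilon>' / 3"
    unfolding continuous_at_eps_delta dist_real_def by blast
  have "c y = x"
    using ascending_curve_ends(2)[OF asc] unfolding x_def y_def .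
  define m where "m = min \<eta> (\<epsilon>' / 3)"
  have m: "0 < m" "m \<le> \<eta>" "m \<le> \<epsilon>' / 3"
    using \<open>\<eta> > 0\<close> \<open>\<epsilon>' > 0\<close> unfolding m_def by auto
  define h where "h = max h0 (y - m / 2)"
  have "h0 \<le> h" "y - m / 2 \<le> h"
    unfolding h_def by auto
  moreover have "h < y"
    using h0 m unfolding h_def y_def by auto
  ultimately have h: "h0 \<le> h" "h < y" "\<bar>h - y\<bar> < \<eta>" "\<bar>h - y\<bar> < \<epsilon>' / 3"
    using m by auto
  obtain \<delta> where "\<delta> > 0"
    and band: "\<And>h' r. h' \<in> {h0..h} \<Longrightarrow> r \<in> {0<..<\<delta>} \<Longrightarrow> (c h' + \<sigma> * r, h') \<in> f"
    using face_beside_edge[OF e c f \<sigma> h0(1) h(1) h(2)[unfolded y_def] \<open>\<epsilon> > 0\<close> side] by blast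
  define r where "r = min \<delta> (\<epsilon>' / 3) / 2"
  have r: "r \<in> {0<..<\<delta>}" "r < \<epsilon>' / 3"
    using \<open>\<delta> > 0\<close> \<open>\<epsilon>' > 0\<close> unfolding r_def by auto
  have "\<bar>\<sigma> * r\<bar> = r"
    using \<sigma> r(1) by (simp add: abs_mult)
  then have "\<bar>c h + \<sigma> * r - x\<bar> + \<bar>h - y\<bar> < \<epsilon>'"
    using abs_triangle_ineq[of "c h - x" "\<sigma> * r"] \<eta>[OF h(3)] \<open>c y = x\<close> h(4) r(2)
    by (simp add: algebra_simps)
  with dist_Pair_le_abs_sum have "dist (c h + \<sigma> * r, h) (x, y) < \<epsilon>'"
    by (rule le_less_trans)
  then show "\<exists>z\<in>f. dist z (p (snd e)) < \<epsilon>'"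
    using band[OF _ r(1), of h] h(1) unfolding x_def y_def by auto
qed

lemma face_between_incoming_edges:
  assumes a: "drawn_curve a s (fst e)" and b: "drawn_curve b s (fst e')"
    and e: "e \<in> E" and e': "e' \<in> E" and head: "snd e' = snd e"
    and c: "edge_curve e c" and c': "edge_curve e' c'" and f: "f \<in> faces V E p \<Gamma>"
    and \<sigma>: "\<bar>\<sigma>\<bar> = 1" and h0: "snd (p (fst e)) < h0" "h0 < snd (p (snd e))"
    and "\<epsilon> > 0" and side: "\<And>r. r \<in> {0<..<\<epsilon>} \<Longrightarrow> (c h0 + \<sigma> * r, h0) \<in> f"
    and "\<delta> > 0" and order: "\<And>h. snd (p (snd e)) - \<delta> < h \<Longrightarrow> h < snd (p (snd e)) \<Longrightarrow>
      snd (p (fst e)) \<le> h \<Longrightarrow> snd (p (fst e')) \<le> h \<Longrightarrow> 0 < \<sigma> * (c' h - c h)"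
  defines "a' \<equiv> join_curves a (snd (p (fst e))) c" and "b' \<equiv> join_curves b (snd (p (fst e'))) c'"
  shows "f \<subseteq> open_strip a' b' (snd (p s)) (snd (p (snd e)))"
proof -
  have a': "drawn_curve a' s (snd e)"
    unfolding a'_def by (rule drawn_curve_join[OF a drawn_curve_edge[OF e c]])
  have b': "drawn_curve b' s (snd e)"
    unfolding b'_def head[symmetric] by (rule drawn_curve_join[OF b drawn_curve_edge[OF e' c']])
  define h where "h = max h0 (max (snd (p (snd e)) - \<delta> / 2) (snd (p (fst e'))))"
  have h: "h0 \<le> h" "h < snd (p (snd e))" "snd (p (snd e)) - \<delta> < h"
    "snd (p (fst e)) \<le> h" "snd (p (fst e')) \<le> h"
    using h0 tail_below_head[OF e'] head \<open>\<delta> > 0\<close> unfolding h_def by auto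
  have "a' h = c h" "b' h = c' h"
    using join_curves_above[of a "p s" "p (fst e)" c "p (snd e)"]
      join_curves_above[of b "p s" "p (fst e')" c' "p (snd e')"] a b c c' h
    unfolding a'_def b'_def drawn_curve_def edge_curve_def by auto
  have gap: "0 < \<sigma> * (c' h - c h)"
    using order h by blast
  obtain d where "d > 0"
    and band: "\<And>h' r. h' \<in> {h0..h} \<Longrightarrow> r \<in> {0<..<d} \<Longrightarrow> (c h' + \<sigma> * r, h') \<in> f"
    using face_beside_edge[OF e c f \<sigma> h0(1) h(1) h(2) \<open>\<epsilon> > 0\<close> side] by blast
  define w where "w = \<bar>c' h - c h\<bar>"
  have "w > 0"
    using gap unfolding w_def by auto
  define r where "r = min d w / 2"
  have r: "r \<in> {0<..<d}" "r < \<bar>c' h - c h\<bar>"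
    using \<open>w > 0\<close> \<open>d > 0\<close> unfolding r_def w_def[symmetric] by (auto simp: min_def)
  have "min (c h) (c' h) < c h + \<sigma> * r" "c h + \<sigma> * r < max (c h) (c' h)"
    using shifted_towards_strictly_between[OF \<sigma> gap _ r(2)] r(1) by auto
  moreover have "snd (p s) \<le> snd (p (fst e))"
    using a unfolding drawn_curve_def ascending_curve_def by blast
  ultimately have "(c h + \<sigma> * r, h) \<in> open_strip a' b' (snd (p s)) (snd (p (snd e)))"
    using \<open>a' h = c h\<close> \<open>b' h = c' h\<close> h0(1) h(1,2) unfolding open_strip_def by simp
  moreover have "(c h + \<sigma> * r, h) \<in> f"
    using band r(1) h(1) by simp
  ultimately show ?thesis
    by (intro face_in_open_strip[OF a' b' f]) blast
qed

lemma bad_edge_enclosed: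
  assumes source: "\<And>v. v \<in> V \<Longrightarrow> \<exists>c. drawn_curve c s v"
    and e: "e \<in> E" and f: "f \<in> faces V E p \<Gamma>" and bad: "bad_edge E \<Gamma> e f"
  obtains a b where "drawn_curve a s (snd e)" and "drawn_curve b s (snd e)"
    and "f \<subseteq> open_strip a b (snd (p s)) (snd (p (snd e)))"
    and "p (snd e) \<in> closure f"
proof -
  obtain \<sigma> e' c c' h0 \<epsilon> \<delta> where \<sigma>: "\<bar>\<sigma>\<bar> = 1" and e': "e' \<in> E" "snd e' = snd e"
    and c: "edge_curve e c" and c': "edge_curve e' c'"
    and h0: "snd (p (fst e)) < h0" "h0 < snd (p (snd e))"
    and "\<epsilon> > 0" and side: "\<And>r. r \<in> {0<..<\<epsilon>} \<Longrightarrow> (c h0 + \<sigma> * r, h0) \<in> f"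
    and "\<delta> > 0" and order: "\<And>h. snd (p (snd e)) - \<delta> < h \<Longrightarrow> h < snd (p (snd e)) \<Longrightarrow>
      snd (p (fst e)) \<le> h \<Longrightarrow> snd (p (fst e')) \<le> h \<Longrightarrow> 0 < \<sigma> * (c' h - c h)"
    using bad_edge_sides[OF e bad] by blast
  have "fst e \<in> V" "fst e' \<in> V"
    using e e'(1) edges_subset by auto
  then obtain a b where a: "drawn_curve a s (fst e)" and b: "drawn_curve b s (fst e')"
    using source by blast
  show ?thesis
  proof (rule that)
    show "drawn_curve (join_curves a (snd (p (fst e))) c) s (snd e)"
      by (rule drawn_curve_join[OF a drawn_curve_edge[OF e c]])
    show "drawn_curve (join_curves b (snd (p (fst e'))) c') s (snd e)"
      using drawn_curve_join[OF b drawn_curve_edge[OF e'(1) c']] e'(2) by simp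
    show "f \<subseteq> open_strip (join_curves a (snd (p (fst e))) c) (join_curves b (snd (p (fst e'))) c')
      (snd (p s)) (snd (p (snd e)))"
      by (rule face_between_incoming_edges[OF a b e e'(1,2) c c' f \<sigma> h0 \<open>\<epsilon> > 0\<close> side \<open>\<delta> > 0\<close> order])
    show "p (snd e) \<in> closure f"
      by (rule head_in_closure_of_face_beside_edge[OF e c f \<sigma> h0 \<open>\<epsilon> > 0\<close> side])
  qed
qed

lemma bad_edges_same_head:
  assumes source: "\<And>v. v \<in> V \<Longrightarrow> \<exists>c. drawn_curve c s v" and f: "f \<in> faces V E p \<Gamma>"
    and e1: "e1 \<in> E" "bad_edge E \<Gamma> e1 f" and e2: "e2 \<in> E" "bad_edge E \<Gamma> e2 f"
  shows "snd e1 = snd e2"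
proof -
  have reach_head: "snd (p (snd e')) \<le> snd (p (snd e)) \<and>
      (snd (p (snd e)) \<le> snd (p (snd e')) \<longrightarrow> p (snd e') = p (snd e))"
    if bad: "e \<in> E" "bad_edge E \<Gamma> e f" "e' \<in> E" "bad_edge E \<Gamma> e' f" for e e'
  proof -
    obtain a b where a: "drawn_curve a s (snd e)" and b: "drawn_curve b s (snd e)"
      and enclosed: "f \<subseteq> open_strip a b (snd (p s)) (snd (p (snd e)))"
      using bad_edge_enclosed[OF source bad(1) f bad(2)] by blast
    have ca: "ascending_curve a (p s) (p (snd e))" and cb: "ascending_curve b (p s) (p (snd e))"
      using a b unfolding drawn_curve_def by auto
    have "closure f \<subseteq> closed_strip a b (snd (p s)) (snd (p (snd e)))"
      using closure_subset_closed_strip[OF _ _ enclosed] ca cb unfolding ascending_curve_def by simp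
    moreover have "p (snd e') \<in> closure f"
      using bad_edge_enclosed[OF source bad(3) f bad(4)] by metis
    ultimately have top: "p (snd e') \<in> closed_strip a b (snd (p s)) (snd (p (snd e)))"
      by blast
    then have "snd (p (snd e')) \<le> snd (p (snd e))"
      unfolding closed_strip_def by simp
    then show ?thesis
      using closed_strip_top[OF ca cb top] by simp
  qed
  have "p (snd e1) = p (snd e2)"
    using reach_head[OF e1 e2] reach_head[OF e2 e1] by auto
  moreover have "snd e1 \<in> V" "snd e2 \<in> V"
    using e1 e2 edges_subset by auto
  ultimately show ?thesis
    using inj_on_vertices by (meson inj_onD)
qed

lemma card_bad_edges_le_indeg:
  assumes "s \<in> V" and source: "\<And>v. v \<in> V \<Longrightarrow> \<exists>c. drawn_curve c s v"
    and f: "f \<in> faces V E p \<Gamma>"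
  obtains v where "v \<in> V" and "card {e \<in> E. bad_edge E \<Gamma> e f} \<le> indeg E v"
proof (cases "{e \<in> E. bad_edge E \<Gamma> e f} = {}")
  case True
  show ?thesis
  proof (rule that[OF \<open>s \<in> V\<close>])
    show "card {e \<in> E. bad_edge E \<Gamma> e f} \<le> indeg E s"
      unfolding True by simp
  qed
next
  case False
  then obtain e0 where e0: "e0 \<in> E" "bad_edge E \<Gamma> e0 f" by blast
  have "snd e = snd e0" if "e \<in> E" "bad_edge E \<Gamma> e f" for e
    using bad_edges_same_head[OF source f that e0] .
  then have "{e \<in> E. bad_edge E \<Gamma> e f} \<subseteq> {e \<in> E. snd e = snd e0}"
    by blast
  moreover have "snd e0 \<in> V"
    using edges_subset e0(1) by auto
  ultimately show ?thesis
    using that card_in_edges_le_indeg[OF finite_edges] by blast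
qed

end

theorem mainTheorem6:
  fixes V :: "'v set" and E :: "('v \<times> 'v) set"
  assumes "finite V" and "E \<subseteq> V \<times> V"
    and "single_source V E"
    and "\<forall>v\<in>V. indeg E v \<le> 2 \<and> outdeg E v \<le> 2"
    and "upward_planar V E"
  shows "\<forall>p \<Gamma>. upward_planar_drawing V E p \<Gamma> \<longrightarrow>
           (\<forall>f\<in>faces V E p \<Gamma>. card {e \<in> E. bad_edge E \<Gamma> e f} \<le> 2)"
proof (intro allI impI ballI)
  fix p \<Gamma> f
  assume "upward_planar_drawing V E p \<Gamma>" and f: "f \<in> faces V E p \<Gamma>"
  then interpret upward_drawing V E p \<Gamma>
    using assms(1,2) by unfold_locales
  obtain s where "s \<in> V" and source: "\<And>v. v \<in> V \<Longrightarrow> \<exists>c. drawn_curve c s v"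
    using drawn_curves_from_source[OF assms(3)] by blast
  obtain v where "v \<in> V" and "card {e \<in> E. bad_edge E \<Gamma> e f} \<le> indeg E v"
    using card_bad_edges_le_indeg[OF \<open>s \<in> V\<close> source f] by blast
  moreover have "indeg E v \<le> 2"
    using assms(4) \<open>v \<in> V\<close> by blast
  ultimately show "card {e \<in> E. bad_edge E \<Gamma> e f} \<le> 2"
    by linarith
qed

end
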